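(* Let $G_1,G_2$ be finite groups written additively, $H$ a subgroup of $G_1$, and $k\ge 2$. If there exist a $(G_1,H,k,1)$-BRDF and a $(G_2,k,1)$-HDM, then there exists a $(G_1\times G_2,H\times G_2,k,1)$-BRDF.
   Context: For a finite additive group $G$ with subgroup $H$, a $(G,H,k,\lambda)$-RDF is a collection of $k$-subsets of $G$ (base blocks) whose differences $x-y$ ($x\neq y$ in a common base block) cover every element of $G\setminus H$ exactly $\lambda$ times and no element of $H$. A $(G,H,k,\lambda)$-BRDF is such an RDF in which all base blocks are disjoint from $H$ and the base blocks together with their negatives $-B=\{-b:b\in B\}$ are pairwise disjoint. For a group $G$ of order $g$, a $(G,k,1)$ difference matrix is a $k\times g$ matrix with entries in $G$ such that, for any two distinct rows, the entrywise difference is a permutation of $G$; it is homogeneous (an HDM) if moreover every row is a permutation of $G$. *)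

theory Defs
  imports Main "HOL-Library.Product_Plus"
begin

text \<open>Finite groups written additively are modelled as types of class
  finite and ab_group_add; the group G is the whole type (UNIV).\<close>

definition additive_subgroup :: "'a::ab_group_add set \<Rightarrow> bool" where
  "additive_subgroup H \<longleftrightarrow> 0 \<in> H \<and> (\<forall>x\<in>H. \<forall>y\<in>H. x + y \<in> H) \<and> (\<forall>x\<in>H. - x \<in> H)"

definition diff_count :: "'a::ab_group_add set list \<Rightarrow> 'a \<Rightarrow> nat" where
  "diff_count F g = (\<Sum>B\<leftarrow>F. card {(x, y). x \<in> B \<and> y \<in> B \<and> x \<noteq> y \<and> x - y = g})"

definition is_rdf :: "'a::{finite,ab_group_add} set \<Rightarrow> nat \<Rightarrow> nat \<Rightarrow> 'a set list \<Rightarrow> bool" where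
  "is_rdf H k lam F \<longleftrightarrow>
     (\<forall>B\<in>set F. card B = k) \<and>
     (\<forall>g. g \<notin> H \<longrightarrow> diff_count F g = lam) \<and>
     (\<forall>g. g \<in> H \<longrightarrow> diff_count F g = 0)"

definition is_brdf :: "'a::{finite,ab_group_add} set \<Rightarrow> nat \<Rightarrow> nat \<Rightarrow> 'a set list \<Rightarrow> bool" where
  "is_brdf H k lam F \<longleftrightarrow>
     is_rdf H k lam F \<and>
     (\<forall>B\<in>set F. B \<inter> H = {}) \<and>
     (\<forall>i<length F. F ! i \<inter> uminus ` (F ! i) = {}) \<and>
     (\<forall>i<length F. \<forall>j<length F. i \<noteq> j \<longrightarrow>
         F ! i \<inter> F ! j = {} \<and> F ! i \<inter> uminus ` (F ! j) = {})"

text \<open>(G,k,1) difference matrix: k x g matrix, rows indexed by i < k,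
  columns by c < g = CARD('a).  Homogeneous: every row is a permutation of G.\<close>

definition is_dm :: "nat \<Rightarrow> (nat \<Rightarrow> nat \<Rightarrow> 'a::{finite,ab_group_add}) \<Rightarrow> bool" where
  "is_dm k M \<longleftrightarrow>
     (\<forall>i<k. \<forall>j<k. i \<noteq> j \<longrightarrow>
        bij_betw (\<lambda>c. M i c - M j c) {..<card (UNIV :: 'a set)} (UNIV :: 'a set))"

definition is_hdm :: "nat \<Rightarrow> (nat \<Rightarrow> nat \<Rightarrow> 'a::{finite,ab_group_add}) \<Rightarrow> bool" where
  "is_hdm k M \<longleftrightarrow> is_dm k M \<and>
     (\<forall>i<k. bij_betw (M i) {..<card (UNIV :: 'a set)} (UNIV :: 'a set))"

end

theory Submission
  imports Defs "HOL-Library.Cardinality"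
begin

text \<open>
  Enumerate each base block B as b_0, ..., b_(k-1) and lift it, for every column c of the
  difference matrix M, to {(b_i, M i c) | i < k}.  A pair (i, j) with b_i - b_j = g produces
  the difference (g, h) in exactly one lift of B, namely in the unique column c with
  M i c - M j c = h.  Hence (g, h) occurs in the lifted family as often as g occurs in the
  original one, which makes it an RDF relative to H x G_2 with the same lambda.  Every lift
  projects onto its block, so disjointness from the subgroup and from the negatives carries
  over, and injectivity of the rows of M keeps the lifts of a single block disjoint.
\<close>

definition diff_pairs :: "'a::ab_group_add set \<Rightarrow> 'a \<Rightarrow> ('a \<times> 'a) set" where
  "diff_pairs B g = {(x, y). x \<in> B \<and> y \<in> B \<and> x \<noteq> y \<and> x - y = g}"

lemma diff_count_eq_sum_list: "diff_count F g = (\<Sum>B\<leftarrow>F. card (diff_pairs B g))"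
  by (simp add: diff_count_def diff_pairs_def)

lemma diff_count_map_product:
  "diff_count (map f (List.product xs ys)) g = (\<Sum>x\<leftarrow>xs. \<Sum>y\<leftarrow>ys. card (diff_pairs (f (x, y)) g))"
  by (induction xs) (simp_all add: diff_count_eq_sum_list comp_def)

lemma card_diff_pairs_image:
  assumes "inj_on e A"
  shows "card (diff_pairs (e ` A) g) = card {(i, j) \<in> A \<times> A. i \<noteq> j \<and> e i - e j = g}"
proof -
  have "diff_pairs (e ` A) g = map_prod e e ` {(i, j) \<in> A \<times> A. i \<noteq> j \<and> e i - e j = g}"
    using assms by (auto simp: diff_pairs_def inj_on_eq_iff)
  moreover have "inj_on (map_prod e e) {(i, j) \<in> A \<times> A. i \<noteq> j \<and> e i - e j = g}"
    using map_prod_inj_on[OF assms assms] by (rule inj_on_subset) auto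
  ultimately show ?thesis by (simp add: card_image)
qed

lemma card_fibre_bij_betw:
  assumes "bij_betw f A B" "y \<in> B"
  shows "card (A \<inter> {x. f x = y}) = 1"
proof -
  obtain x where "x \<in> A" "f x = y" using assms by (auto simp: bij_betw_def)
  then have "A \<inter> {x. f x = y} = {x}" using assms(1) by (auto simp: bij_betw_def inj_on_def)
  then show ?thesis by simp
qed

lemma pairwise_disjoint_nth_iff:
  assumes "{} \<notin> set F"
  shows "(\<forall>i<length F. \<forall>j<length F. i \<noteq> j \<longrightarrow> F ! i \<inter> F ! j = {})
    \<longleftrightarrow> distinct F \<and> pairwise disjnt (set F)"
proof
  assume disj: "\<forall>i<length F. \<forall>j<length F. i \<noteq> j \<longrightarrow> F ! i \<inter> F ! j = {}"
  have "distinct F"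
    unfolding distinct_conv_nth
  proof (intro allI impI)
    fix i j assume "i < length F" "j < length F" "i \<noteq> j"
    then have "F ! i \<inter> F ! j = {}" "F ! i \<noteq> {}"
      using disj assms nth_mem by metis+
    then show "F ! i \<noteq> F ! j"
      by auto
  qed
  moreover have "pairwise disjnt (set F)"
  proof (rule pairwiseI)
    fix B B' assume "B \<in> set F" "B' \<in> set F" "B \<noteq> B'"
    then obtain i j where "i < length F" "j < length F" "B = F ! i" "B' = F ! j"
      by (metis in_set_conv_nth)
    with \<open>B \<noteq> B'\<close> show "disjnt B B'"
      using disj by (metis disjnt_def)
  qed
  ultimately show "distinct F \<and> pairwise disjnt (set F)" ..
next
  assume F: "distinct F \<and> pairwise disjnt (set F)"
  show "\<forall>i<length F. \<forall>j<length F. i \<noteq> j \<longrightarrow> F ! i \<inter> F ! j = {}"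
  proof (intro allI impI)
    fix i j assume "i < length F" "j < length F" "i \<noteq> j"
    then have "F ! i \<noteq> F ! j"
      using F nth_eq_iff_index_eq by blast
    with \<open>i < length F\<close> \<open>j < length F\<close> show "F ! i \<inter> F ! j = {}"
      using F by (metis disjnt_def nth_mem pairwiseD)
  qed
qed

lemma is_brdf_iff:
  assumes "0 < k"
  shows "is_brdf H k lam F \<longleftrightarrow>
    is_rdf H k lam F \<and> (\<forall>B\<in>set F. B \<inter> H = {}) \<and> distinct F \<and> pairwise disjnt (set F) \<and>
    (\<forall>B\<in>set F. \<forall>B'\<in>set F. B \<inter> uminus ` B' = {})"
proof -
  have neg_iff: "(\<forall>i<length F. F ! i \<inter> uminus ` (F ! i) = {}) \<and>
      (\<forall>i<length F. \<forall>j<length F. i \<noteq> j \<longrightarrow> F ! i \<inter> uminus ` (F ! j) = {})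
    \<longleftrightarrow> (\<forall>B\<in>set F. \<forall>B'\<in>set F. B \<inter> uminus ` B' = {})"
  proof (intro iffI ballI)
    fix B B' assume "B \<in> set F" "B' \<in> set F"
      and "(\<forall>i<length F. F ! i \<inter> uminus ` (F ! i) = {}) \<and>
        (\<forall>i<length F. \<forall>j<length F. i \<noteq> j \<longrightarrow> F ! i \<inter> uminus ` (F ! j) = {})"
    then show "B \<inter> uminus ` B' = {}"
      by (metis in_set_conv_nth)
  qed simp
  have split: "(\<forall>i<length F. \<forall>j<length F. i \<noteq> j \<longrightarrow>
        F ! i \<inter> F ! j = {} \<and> F ! i \<inter> uminus ` (F ! j) = {})
    \<longleftrightarrow> (\<forall>i<length F. \<forall>j<length F. i \<noteq> j \<longrightarrow> F ! i \<inter> F ! j = {}) \<and>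
      (\<forall>i<length F. \<forall>j<length F. i \<noteq> j \<longrightarrow> F ! i \<inter> uminus ` (F ! j) = {})"
    by blast
  have "{} \<notin> set F" if "is_rdf H k lam F"
    using that assms by (auto simp: is_rdf_def)
  then show ?thesis
    unfolding is_brdf_def split using neg_iff pairwise_disjoint_nth_iff[of F] by argo
qed

definition dm_block :: "(nat \<Rightarrow> 'a) \<Rightarrow> (nat \<Rightarrow> nat \<Rightarrow> 'b) \<Rightarrow> nat \<Rightarrow> nat \<Rightarrow> ('a \<times> 'b) set" where
  "dm_block e M k c = (\<lambda>i. (e i, M i c)) ` {..<k}"

lemma fst_image_dm_block: "fst ` dm_block e M k c = e ` {..<k}"
  by (simp add: dm_block_def image_image)

lemma card_dm_block: "inj_on e {..<k} \<Longrightarrow> card (dm_block e M k c) = k"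
  unfolding dm_block_def by (subst card_image) (auto simp: inj_on_def)

lemma dm_block_disjoint:
  assumes "inj_on e {..<k}" "\<forall>i<k. inj_on (M i) C" "c \<in> C" "c' \<in> C" "c \<noteq> c'"
  shows "dm_block e M k c \<inter> dm_block e M k c' = {}"
  using assms unfolding dm_block_def inj_on_def by auto (metis lessThan_iff)

lemma sum_card_diff_pairs_dm_block:
  fixes M :: "nat \<Rightarrow> nat \<Rightarrow> 'b::{finite,ab_group_add}"
  assumes e: "inj_on e {..<k}" and M: "is_dm k M"
  shows "(\<Sum>c<CARD('b). card (diff_pairs (dm_block e M k c) (g, h)))
    = card (diff_pairs (e ` {..<k}) g)"
proof -
  let ?n = "CARD('b)"
  let ?Q = "{(i, j) \<in> {..<k} \<times> {..<k}. i \<noteq> j \<and> e i - e j = g}"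
  let ?P = "\<lambda>c (i, j). M i c - M j c = h"
  have block: "card (diff_pairs (dm_block e M k c) (g, h)) = card (?Q \<inter> {p. ?P c p})" for c
  proof -
    have "inj_on (\<lambda>i. (e i, M i c)) {..<k}" using e by (auto simp: inj_on_def)
    then show ?thesis
      unfolding dm_block_def by (subst card_diff_pairs_image) (auto intro: arg_cong[where f = card])
  qed
  have column: "card ({..<?n} \<inter> {c. ?P c p}) = 1" if p: "p \<in> ?Q" for p
  proof -
    obtain i j where "p = (i, j)" "i < k" "j < k" "i \<noteq> j" using p by auto
    then show ?thesis
      using M card_fibre_bij_betw[of "\<lambda>c. M i c - M j c" _ UNIV h] by (simp add: is_dm_def)
  qed
  have "finite ?Q"
    by (rule finite_subset[of _ "{..<k} \<times> {..<k}"]) auto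
  then have "(\<Sum>c<?n. card (?Q \<inter> {p. ?P c p})) = (\<Sum>c<?n. \<Sum>p\<in>?Q. of_bool (?P c p))"
    by simp
  also have "\<dots> = (\<Sum>p\<in>?Q. \<Sum>c<?n. of_bool (?P c p))"
    by (rule sum.swap)
  also have "\<dots> = (\<Sum>p\<in>?Q. 1)"
    using column by simp
  finally show ?thesis
    by (simp add: block card_diff_pairs_image[OF e])
qed

definition block_enum :: "nat \<Rightarrow> 'a set \<Rightarrow> nat \<Rightarrow> 'a" where
  "block_enum k B = (SOME e. bij_betw e {..<k} B)"

lemma bij_betw_block_enum:
  assumes "finite B" "card B = k"
  shows "bij_betw (block_enum k B) {..<k} B"
proof -
  have "\<exists>e. bij_betw e {..<k} B"
    using ex_bij_betw_nat_finite[OF assms(1)] assms(2) by (simp add: atLeast0LessThan)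
  then show ?thesis
    unfolding block_enum_def by (rule someI_ex)
qed

definition dm_product :: "(nat \<Rightarrow> nat \<Rightarrow> 'b::finite) \<Rightarrow> nat \<Rightarrow> 'a set list \<Rightarrow> ('a \<times> 'b) set list" where
  "dm_product M k F = map (\<lambda>(B, c). dm_block (block_enum k B) M k c) (List.product F [0..<CARD('b)])"

lemma diff_count_dm_product:
  fixes M :: "nat \<Rightarrow> nat \<Rightarrow> 'b::{finite,ab_group_add}" and F :: "'a::{finite,ab_group_add} set list"
  assumes F: "\<forall>B\<in>set F. card B = k" and M: "is_dm k M"
  shows "diff_count (dm_product M k F) (g, h) = diff_count F g"
proof -
  have "diff_count (dm_product M k F) (g, h)
      = (\<Sum>B\<leftarrow>F. \<Sum>c<CARD('b). card (diff_pairs (dm_block (block_enum k B) M k c) (g, h)))"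
    by (simp add: dm_product_def diff_count_map_product interv_sum_list_conv_sum_set_nat
        atLeast0LessThan)
  also have "\<dots> = (\<Sum>B\<leftarrow>F. card (diff_pairs B g))"
  proof (rule arg_cong[where f = sum_list], rule map_cong[OF refl])
    fix B assume "B \<in> set F"
    then have "bij_betw (block_enum k B) {..<k} B"
      using F by (simp add: bij_betw_block_enum)
    then show "(\<Sum>c<CARD('b). card (diff_pairs (dm_block (block_enum k B) M k c) (g, h)))
        = card (diff_pairs B g)"
      using sum_card_diff_pairs_dm_block[OF _ M] by (metis bij_betw_def)
  qed
  finally show ?thesis
    by (simp add: diff_count_eq_sum_list)
qed

lemma is_rdf_dm_product:
  fixes M :: "nat \<Rightarrow> nat \<Rightarrow> 'b::{finite,ab_group_add}"
  assumes F: "is_rdf H k lam F" and M: "is_dm k M"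
  shows "is_rdf (H \<times> (UNIV :: 'b set)) k lam (dm_product M k F)"
proof -
  have card_F: "\<forall>B\<in>set F. card B = k"
    using F by (simp add: is_rdf_def)
  have "card X = k" if "X \<in> set (dm_product M k F)" for X
    using that card_F
    by (auto simp: dm_product_def intro!: card_dm_block bij_betw_imp_inj_on[OF bij_betw_block_enum])
  moreover have "diff_count (dm_product M k F) (g, h) = diff_count F g" for g h
    using diff_count_dm_product[OF card_F M] .
  ultimately show ?thesis
    using F by (auto simp: is_rdf_def)
qed

lemma is_brdf_dm_product:
  fixes M :: "nat \<Rightarrow> nat \<Rightarrow> 'b::{finite,ab_group_add}"
  assumes F: "is_brdf H k lam F" and M: "is_hdm k M" and k: "0 < k"
  shows "is_brdf (H \<times> (UNIV :: 'b set)) k lam (dm_product M k F)"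
proof -
  let ?n = "CARD('b)"
  define blk :: "'a set \<Rightarrow> nat \<Rightarrow> ('a \<times> 'b) set"
    where "blk B c = dm_block (block_enum k B) M k c" for B c
  have rdf: "is_rdf H k lam F" and avoid_H: "\<forall>B\<in>set F. B \<inter> H = {}"
    and "distinct F" and disj: "pairwise disjnt (set F)"
    and neg: "\<forall>B\<in>set F. \<forall>B'\<in>set F. B \<inter> uminus ` B' = {}"
    using F k by (simp_all add: is_brdf_iff)
  have rdf': "is_rdf (H \<times> (UNIV :: 'b set)) k lam (dm_product M k F)"
    using rdf M by (simp add: is_hdm_def is_rdf_dm_product)
  have product_eq: "dm_product M k F = map (\<lambda>(B, c). blk B c) (List.product F [0..<?n])"
    by (simp add: dm_product_def blk_def)
  have in_product: "X \<in> set (dm_product M k F) \<longleftrightarrow> (\<exists>B\<in>set F. \<exists>c<?n. X = blk B c)" for X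
    by (force simp: product_eq)
  have bij: "bij_betw (block_enum k B) {..<k} B" if "B \<in> set F" for B
    using that rdf by (simp add: is_rdf_def bij_betw_block_enum)
  have fst_blk: "fst ` blk B c = B" if "B \<in> set F" for B c
    using bij[OF that] by (simp add: blk_def fst_image_dm_block bij_betw_def)
  have nonempty: "blk B c \<noteq> {}" for B c
    using k by (auto simp: blk_def dm_block_def)
  have overlap: "B = B' \<and> c = c'"
    if "B \<in> set F" "B' \<in> set F" "c < ?n" "c' < ?n" "blk B c \<inter> blk B' c' \<noteq> {}" for B B' c c'
  proof -
    have "B \<inter> B' \<noteq> {}"
      using that(5) fst_blk[OF that(1)] fst_blk[OF that(2)] by blast
    then have "B = B'"
      using disj that(1,2) by (auto simp: pairwise_def disjnt_def)
    moreover have "\<forall>i<k. inj_on (M i) {..<?n}"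
      using M by (simp add: is_hdm_def bij_betw_def)
    ultimately show ?thesis
      using that dm_block_disjoint[OF bij_betw_imp_inj_on[OF bij[OF that(1)]], of M "{..<?n}" c c']
      by (auto simp: blk_def)
  qed
  have fst_image: "fst ` X \<in> set F" if "X \<in> set (dm_product M k F)" for X
    using that fst_blk by (auto simp: in_product)
  have "inj_on (\<lambda>(B, c). blk B c) (set F \<times> {..<?n})"
  proof (rule inj_onI, clarsimp)
    fix B c B' c' assume "B \<in> set F" "c < ?n" "B' \<in> set F" "c' < ?n" "blk B c = blk B' c'"
    then show "B = B' \<and> c = c'"
      using overlap nonempty by (metis inf.idem)
  qed
  then have "distinct (dm_product M k F)"
    using \<open>distinct F\<close> by (simp add: product_eq distinct_map distinct_product atLeast0LessThan)
  moreover have "pairwise disjnt (set (dm_product M k F))"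
  proof (rule pairwiseI)
    fix X Y assume "X \<in> set (dm_product M k F)" "Y \<in> set (dm_product M k F)" "X \<noteq> Y"
    then show "disjnt X Y"
      unfolding in_product disjnt_def using overlap by metis
  qed
  moreover have "\<forall>X\<in>set (dm_product M k F). X \<inter> H \<times> UNIV = {}"
    using avoid_H fst_image by fastforce
  moreover have "X \<inter> uminus ` Y = {}"
    if "X \<in> set (dm_product M k F)" "Y \<in> set (dm_product M k F)" for X Y
  proof (rule equals0I)
    fix p assume "p \<in> X \<inter> uminus ` Y"
    then obtain q where "p \<in> X" "q \<in> Y" "p = - q"
      by blast
    then have "fst p \<in> fst ` X" "fst p \<in> uminus ` fst ` Y"
      by (metis fst_uminus imageI)+
    moreover have "fst ` X \<inter> uminus ` fst ` Y = {}"
      using neg fst_image[OF that(1)] fst_image[OF that(2)] by simp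
    ultimately show False
      by blast
  qed
  ultimately show ?thesis
    using rdf' k by (simp add: is_brdf_iff)
qed

theorem mainTheorem14:
  fixes H :: "'a::{finite,ab_group_add} set" and k :: nat
  assumes "additive_subgroup H"
    and "k \<ge> 2"
    and "\<exists>F. is_brdf H k 1 F"
    and "\<exists>M :: nat \<Rightarrow> nat \<Rightarrow> 'b::{finite,ab_group_add}. is_hdm k M"
  shows "\<exists>F. is_brdf (H \<times> (UNIV :: 'b set)) k 1 F"
proof -
  obtain F where F: "is_brdf H k 1 F"
    using assms(3) by blast
  obtain M :: "nat \<Rightarrow> nat \<Rightarrow> 'b" where M: "is_hdm k M"
    using assms(4) by blast
  have "0 < k"
    using assms(2) by simp
  then show ?thesis
    using is_brdf_dm_product[OF F M] by blast
qed

end
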